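(* Let $G$ be a layered group acting on the binary tree. Then $G$ is saturated.
   Context: The binary tree is $\mathcal T=X^*$ with $X=\{0,1\}$; $W$ is its isometry group. For $v\in X^*$ and $g\in W$, $v*g$ is the isometry acting as $g$ on the subtree $v\mathcal T$ (i.e. $(vw)^{v*g}=vw^g$) and fixing other vertices, and $g@v$ is the state of $g$ at $v$, i.e. $(vw)^g=v^g w^{g@v}$. $G\le W$ is level-transitive if it is transitive on $X^n$ for all $n$, and layered if it is level-transitive and $x*G\le G$ for all $x\in X$. $G$ is saturated if for every $n\in\mathbb N$ it contains a characteristic subgroup $H_n$ fixing every vertex of $X^n$ and such that $\{h@v:h\in H_n\}$ is level-transitive for every $v\in X^n$. *)

theory Defs
  imports "HOL-Algebra.Group" "HOL-Library.Sublist"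
begin

text \<open>Vertices of the binary tree X^* with X = {0,1} are boolean lists (False = 0, True = 1).
  The root is the empty list; level n is the set of lists of length n.\<close>

type_synonym vertex = "bool list"
type_synonym tree_iso = "vertex \<Rightarrow> vertex"

definition W :: "tree_iso set" where
  "W = {f. bij f \<and> (\<forall>v. length (f v) = length v) \<and> (\<forall>v n. f (take n v) = take n (f v))}"

text \<open>Right action: v^(g h) = (v^g)^h, hence the product g h is the function h o g.\<close>
definition W_grp :: "tree_iso monoid" where
  "W_grp = \<lparr>carrier = W, mult = (\<lambda>g h. h \<circ> g), one = id\<rparr>"

definition grp_of :: "tree_iso set \<Rightarrow> tree_iso monoid" where
  "grp_of G = W_grp\<lparr>carrier := G\<rparr>"

definition at_vertex :: "vertex \<Rightarrow> tree_iso \<Rightarrow> tree_iso" where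
  "at_vertex v g = (\<lambda>u. if prefix v u then v @ g (drop (length v) u) else u)"

text \<open>g @ v : the state (section) of g at v, i.e. (v w)^g = v^g w^(g@v).\<close>
definition state :: "tree_iso \<Rightarrow> vertex \<Rightarrow> tree_iso" where
  "state g v = (\<lambda>w. drop (length v) (g (v @ w)))"

definition level_transitive :: "tree_iso set \<Rightarrow> bool" where
  "level_transitive G \<longleftrightarrow>
     (\<forall>n. \<forall>u w. length u = n \<and> length w = n \<longrightarrow> (\<exists>g\<in>G. g u = w))"

definition layered :: "tree_iso set \<Rightarrow> bool" where
  "layered G \<longleftrightarrow> level_transitive G \<and> (\<forall>x::bool. \<forall>g\<in>G. at_vertex [x] g \<in> G)"

definition characteristic :: "'a set \<Rightarrow> ('a, 'b) monoid_scheme \<Rightarrow> bool" where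
  "characteristic H K \<longleftrightarrow> subgroup H K \<and> (\<forall>\<phi>. \<phi> \<in> iso K K \<longrightarrow> \<phi> ` H = H)"

definition saturated :: "tree_iso set \<Rightarrow> bool" where
  "saturated G \<longleftrightarrow>
     (\<forall>n::nat. \<exists>H. characteristic H (grp_of G)
        \<and> (\<forall>h\<in>H. \<forall>v. length v = n \<longrightarrow> h v = v)
        \<and> (\<forall>v. length v = n \<longrightarrow> level_transitive {state h v | h. h \<in> H}))"

end

theory Submission
  imports Defs "HOL-Algebra.Generated_Groups"
begin

(* Take H_n to be the n-th derived subgroup of G, which is characteristic in any group.
  An element fixing level n acts below each vertex of level n by an element of the abelian group
  Sym{0,1}, so commutators of such elements fix level n+1: by induction H_n fixes level n.
  Conversely the states of H_n at a vertex u of level n exhaust G: for g in G and a child u x of u,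
  choose a, b in H_n whose states at u are some t in G moving x and x*g^-1 (which lies in G since
  G is layered); the state of [a,b] at u is [t, x*g^-1], and its state at x is g. Hence the states
  of H_n at u form a level-transitive set, since G is level transitive. *)

text \<open>The plain \<open>inv\<close> is taken by the group inverse syntax of HOL-Algebra.\<close>
abbreviation finv :: "('a \<Rightarrow> 'b) \<Rightarrow> 'b \<Rightarrow> 'a" where
  "finv f \<equiv> inv_into UNIV f"

lemma W_length: "f \<in> W \<Longrightarrow> length (f v) = length v"
  unfolding W_def by auto

lemma W_take: "f \<in> W \<Longrightarrow> f (take n v) = take n (f v)"
  unfolding W_def by auto

lemma W_bij: "f \<in> W \<Longrightarrow> bij f"
  unfolding W_def by auto

lemma W_Nil: "f \<in> W \<Longrightarrow> f [] = []"
  using W_take[of f 0 "[]"] by simp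

lemma id_in_W: "id \<in> W"
  unfolding W_def by auto

lemma comp_in_W: "f \<in> W \<Longrightarrow> g \<in> W \<Longrightarrow> g \<circ> f \<in> W"
  unfolding W_def by (auto intro: bij_comp)

lemma finv_in_W:
  assumes "f \<in> W"
  shows "finv f \<in> W"
proof -
  have surj: "f (finv f v) = v" for v
    using W_bij[OF assms] by (simp add: bij_is_surj surj_f_inv_f)
  have "length (finv f v) = length v" for v
    using W_length[OF assms, of "finv f v"] surj by simp
  moreover have "finv f (take n v) = take n (finv f v)" for v n
    using W_take[OF assms, of n "finv f v"] surj W_bij[OF assms]
    by (metis bij_is_inj inv_f_f)
  ultimately show ?thesis
    using W_bij[OF assms] unfolding W_def by (auto intro: bij_imp_bij_inv)
qed

lemma finv_fixed:
  assumes "f \<in> W" "f u = u"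
  shows "finv f u = u"
  using inv_f_eq[OF bij_is_inj[OF W_bij[OF assms(1)]] assms(2)] .

lemma comp_finv_W: "f \<in> W \<Longrightarrow> f \<circ> finv f = id"
  using surj_iff W_bij bij_is_surj by metis

lemma finv_comp_W: "f \<in> W \<Longrightarrow> finv f \<circ> f = id"
  using inv_o_cancel W_bij bij_is_inj by metis

lemma group_W_grp: "group W_grp"
proof (rule groupI)
  fix x assume "x \<in> carrier W_grp"
  then have "finv x \<in> W" "x \<circ> finv x = id"
    using finv_in_W comp_finv_W by (auto simp: W_grp_def)
  then show "\<exists>y\<in>carrier W_grp. y \<otimes>\<^bsub>W_grp\<^esub> x = \<one>\<^bsub>W_grp\<^esub>"
    by (auto simp: W_grp_def)
qed (auto simp: W_grp_def comp_in_W id_in_W comp_assoc)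

lemma W_grp_m_inv: "f \<in> W \<Longrightarrow> inv\<^bsub>W_grp\<^esub> f = finv f"
  using finv_in_W comp_finv_W
  by (intro group.inv_equality[OF group_W_grp]) (auto simp: W_grp_def)

lemma W_append: "f \<in> W \<Longrightarrow> f (u @ w) = f u @ state f u w"
  unfolding state_def by (metis W_take append_take_drop_id append_eq_conv_conj)

lemma state_append: "state f (u @ v) = state (state f u) v"
  by (simp add: state_def fun_eq_iff add.commute)

lemma state_id: "state id u = id"
  by (simp add: state_def fun_eq_iff)

lemma state_comp:
  assumes "f \<in> W" "g \<in> W"
  shows "state (g \<circ> f) u = state g (f u) \<circ> state f u"
proof
  fix w
  have "g (f (u @ w)) = g (f u) @ state g (f u) (state f u w)"
    using W_append[OF assms(1), of u w] W_append[OF assms(2), of "f u" "state f u w"] by simp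
  then show "state (g \<circ> f) u w = (state g (f u) \<circ> state f u) w"
    using W_length[OF assms(2)] W_length[OF assms(1)] by (simp add: state_def)
qed

lemma state_finv_comp:
  assumes "f \<in> W"
  shows "state (finv f) (f u) \<circ> state f u = id" "state f u \<circ> state (finv f) (f u) = id"
proof -
  have "finv f (f u) = u"
    using W_bij[OF assms] by (simp add: bij_is_inj)
  then show "state (finv f) (f u) \<circ> state f u = id" "state f u \<circ> state (finv f) (f u) = id"
    using state_comp[OF assms finv_in_W[OF assms], of u] state_comp[OF finv_in_W[OF assms] assms, of "f u"]
    by (simp_all add: finv_comp_W comp_finv_W assms state_id)
qed

lemma state_finv: "f \<in> W \<Longrightarrow> state (finv f) (f u) = finv (state f u)"
  using state_finv_comp by (metis inv_unique_comp)

lemma state_in_W: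
  assumes "f \<in> W"
  shows "state f u \<in> W"
proof -
  have "length (state f u w) = length w" for w
    using W_length[OF assms, of "u @ w"] by (simp add: state_def)
  moreover have "state f u (take n w) = take n (state f u w)" for n w
  proof -
    have "f (u @ take n w) = take (length u + n) (f (u @ w))"
      using W_take[OF assms, of "length u + n" "u @ w"] by simp
    then show ?thesis
      by (simp add: state_def drop_take)
  qed
  moreover have "bij (state f u)"
    using state_finv_comp[OF assms] by (rule o_bij)
  ultimately show ?thesis
    unfolding W_def by auto
qed

lemma W_level_one:
  assumes "s \<in> W"
  shows "\<exists>p. \<forall>x. s [x] = [x \<noteq> p]"
proof -
  have "\<exists>y. s [x] = [y]" for x
    using W_length[OF assms, of "[x]"] by (cases "s [x]") auto
  then obtain \<tau> where \<tau>: "\<And>x. s [x] = [\<tau> x]"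
    by metis
  have "\<tau> True \<noteq> \<tau> False"
    using \<tau>[of True] \<tau>[of False] W_bij[OF assms] by (metis bij_is_inj inj_eq list.inject)
  then have "\<tau> x = (x \<noteq> \<tau> False)" for x
    by (cases x) auto
  then show ?thesis
    using \<tau> by metis
qed

definition commutator :: "tree_iso \<Rightarrow> tree_iso \<Rightarrow> tree_iso" where
  "commutator a b = finv b \<circ> finv a \<circ> b \<circ> a"

lemma commutator_in_W: "a \<in> W \<Longrightarrow> b \<in> W \<Longrightarrow> commutator a b \<in> W"
  unfolding commutator_def by (simp add: comp_in_W finv_in_W)

lemma commutator_fixes_level_one:
  assumes "s \<in> W" "t \<in> W"
  shows "commutator s t [x] = [x]"
proof -
  obtain p q where p: "\<And>x. s [x] = [x \<noteq> p]" and q: "\<And>x. t [x] = [x \<noteq> q]"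
    using W_level_one[OF assms(1)] W_level_one[OF assms(2)] by metis
  have "finv s [x] = [x \<noteq> p]" "finv t [x] = [x \<noteq> q]" for x
    using inv_f_eq[OF bij_is_inj[OF W_bij[OF assms(1)]] p[of "x \<noteq> p"]]
      inv_f_eq[OF bij_is_inj[OF W_bij[OF assms(2)]] q[of "x \<noteq> q"]]
    by (cases p; cases q; simp)+
  then show ?thesis
    using p q by (cases p; cases q) (auto simp: commutator_def)
qed

lemma state_commutator:
  assumes a: "a \<in> W" "a u = u" and b: "b \<in> W" "b u = u"
  shows "state (commutator a b) u = commutator (state a u) (state b u)"
proof -
  have a': "finv a \<in> W" "finv a u = u" and b': "finv b \<in> W" "finv b u = u"
    using a b finv_in_W finv_fixed by auto
  have "state (commutator a b) u = state (finv b \<circ> finv a \<circ> b) u \<circ> state a u"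
    using state_comp[OF a(1) comp_in_W[OF b(1) comp_in_W[OF a'(1) b'(1)]], of u] a(2)
    by (simp add: commutator_def)
  also have "\<dots> = state (finv b \<circ> finv a) u \<circ> state b u \<circ> state a u"
    using state_comp[OF b(1) comp_in_W[OF a'(1) b'(1)], of u] b(2) by simp
  also have "\<dots> = state (finv b) u \<circ> state (finv a) u \<circ> state b u \<circ> state a u"
    using state_comp[OF a'(1) b'(1), of u] a'(2) by simp
  also have "\<dots> = commutator (state a u) (state b u)"
    using state_finv[OF a(1), of u] state_finv[OF b(1), of u] a b by (simp add: commutator_def)
  finally show ?thesis .
qed

lemma commutator_fixes_next_level:
  assumes "a \<in> W" "b \<in> W" "\<forall>v. length v = n \<longrightarrow> a v = v" "\<forall>v. length v = n \<longrightarrow> b v = v"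
  shows "\<forall>v. length v = Suc n \<longrightarrow> commutator a b v = v"
proof (intro allI impI)
  fix v :: vertex assume "length v = Suc n"
  then obtain u x where v: "v = u @ [x]" and u: "length u = n"
    by (cases v rule: rev_cases) auto
  have "a u = u" "b u = u"
    using assms(3,4) u by auto
  then have "commutator a b u = u" "state (commutator a b) u [x] = [x]"
    using assms(1,2) finv_fixed[OF assms(1)] finv_fixed[OF assms(2)]
      state_commutator[OF assms(1) _ assms(2)] commutator_fixes_level_one[OF state_in_W state_in_W]
    by (simp_all add: commutator_def)
  then show "commutator a b v = v"
    using W_append[OF commutator_in_W[OF assms(1,2)]] v by simp
qed

lemma subgroup_W_grp_subset: "subgroup G W_grp \<Longrightarrow> G \<subseteq> W"
  using subgroup.subset by (force simp: W_grp_def)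

lemma group_grp_of: "subgroup G W_grp \<Longrightarrow> group (grp_of G)"
  unfolding grp_of_def by (rule group.subgroup_imp_group[OF group_W_grp])

lemma carrier_grp_of [simp]: "carrier (grp_of G) = G"
  by (simp add: grp_of_def)

lemma mult_grp_of [simp]: "a \<otimes>\<^bsub>grp_of G\<^esub> b = b \<circ> a"
  by (simp add: grp_of_def W_grp_def)

lemma m_inv_grp_of:
  assumes "subgroup G W_grp" "a \<in> G"
  shows "inv\<^bsub>grp_of G\<^esub> a = finv a"
  using group.m_inv_consistent[OF group_W_grp assms] subgroup_W_grp_subset[OF assms(1)] assms(2)
  by (auto simp: grp_of_def W_grp_m_inv)

lemma grp_of_commutator:
  assumes "subgroup G W_grp" "a \<in> G" "b \<in> G"
  shows "a \<otimes>\<^bsub>grp_of G\<^esub> b \<otimes>\<^bsub>grp_of G\<^esub> inv\<^bsub>grp_of G\<^esub> a \<otimes>\<^bsub>grp_of G\<^esub> inv\<^bsub>grp_of G\<^esub> b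
    = commutator a b"
  using assms by (simp add: m_inv_grp_of commutator_def comp_assoc)

definition level_stabilizer :: "tree_iso set \<Rightarrow> nat \<Rightarrow> tree_iso set" where
  "level_stabilizer G n = {g \<in> G. \<forall>v. length v = n \<longrightarrow> g v = v}"

lemma subgroup_level_stabilizer:
  assumes G: "subgroup G W_grp"
  shows "subgroup (level_stabilizer G n) (grp_of G)"
proof (rule group.subgroupI[OF group_grp_of[OF G]])
  interpret K: group "grp_of G"
    using group_grp_of[OF G] .
  have "id \<in> G"
    using K.one_closed by (simp add: grp_of_def W_grp_def)
  then show "level_stabilizer G n \<noteq> {}"
    by (auto simp: level_stabilizer_def)
  fix a b
  assume a: "a \<in> level_stabilizer G n" and b: "b \<in> level_stabilizer G n"
  then have aG: "a \<in> G" and bG: "b \<in> G"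
    by (auto simp: level_stabilizer_def)
  show "inv\<^bsub>grp_of G\<^esub> a \<in> level_stabilizer G n"
    using a K.inv_closed[of a] aG finv_fixed subgroup_W_grp_subset[OF G]
    by (auto simp: level_stabilizer_def m_inv_grp_of[OF G aG])
  show "a \<otimes>\<^bsub>grp_of G\<^esub> b \<in> level_stabilizer G n"
    using a b K.m_closed[of a b] aG bG by (auto simp: level_stabilizer_def)
qed (auto simp: level_stabilizer_def)

lemma derived_series_fixes_level:
  assumes G: "subgroup G W_grp"
  shows "(derived (grp_of G) ^^ n) G \<subseteq> level_stabilizer G n"
proof (induction n)
  case 0
  show ?case
    using W_Nil subgroup_W_grp_subset[OF G] by (auto simp: level_stabilizer_def)
next
  case (Suc n)
  interpret K: group "grp_of G"
    using group_grp_of[OF G] .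
  let ?D = "(derived (grp_of G) ^^ n) G"
  have "derived_set (grp_of G) ?D \<subseteq> level_stabilizer G (Suc n)"
  proof clarify
    fix a b assume a: "a \<in> ?D" and b: "b \<in> ?D"
    have "a \<in> level_stabilizer G n" "b \<in> level_stabilizer G n"
      using a b Suc.IH by auto
    then have "a \<in> G" "b \<in> G" "\<forall>v. length v = Suc n \<longrightarrow> commutator a b v = v"
      using commutator_fixes_next_level subgroup_W_grp_subset[OF G]
      by (auto simp: level_stabilizer_def)
    moreover have "a \<otimes>\<^bsub>grp_of G\<^esub> b \<otimes>\<^bsub>grp_of G\<^esub> inv\<^bsub>grp_of G\<^esub> a \<otimes>\<^bsub>grp_of G\<^esub> inv\<^bsub>grp_of G\<^esub> b
        \<in> carrier (grp_of G)"
      using \<open>a \<in> G\<close> \<open>b \<in> G\<close> by (intro K.m_closed K.inv_closed) simp_all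
    moreover note grp_of_commutator[OF G \<open>a \<in> G\<close> \<open>b \<in> G\<close>]
    ultimately show "a \<otimes>\<^bsub>grp_of G\<^esub> b \<otimes>\<^bsub>grp_of G\<^esub> inv\<^bsub>grp_of G\<^esub> a \<otimes>\<^bsub>grp_of G\<^esub> inv\<^bsub>grp_of G\<^esub> b
        \<in> level_stabilizer G (Suc n)"
      by (simp add: level_stabilizer_def del: mult_grp_of)
  qed
  then show ?case
    unfolding funpow.simps comp_apply derived_def
    by (rule K.generate_subgroup_incl[OF _ subgroup_level_stabilizer[OF G]])
qed

lemma inj_at_vertex:
  assumes "inj f"
  shows "inj (at_vertex v f)"
proof (rule injI)
  fix u w assume "at_vertex v f u = at_vertex v f w"
  then show "u = w"
    using assms by (auto simp: at_vertex_def prefix_def inj_eq split: if_splits)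
qed

lemma state_commutator_at_vertex:
  assumes t: "t \<in> W" "t [x] = [\<not> x]" and g: "bij g"
  shows "state (commutator t (at_vertex [x] (finv g))) [x] = g"
proof
  fix w
  let ?r = "at_vertex [x] (finv g)"
  let ?y = "state t [x] w"
  have "t (x # w) = (\<not> x) # ?y"
    using W_append[OF t(1), of "[x]" w] t(2) by simp
  then have "finv t ((\<not> x) # ?y) = x # w"
    using inv_f_eq[OF bij_is_inj[OF W_bij[OF t(1)]]] by blast
  moreover have "?r ((\<not> x) # ?y) = (\<not> x) # ?y"
    by (simp add: at_vertex_def)
  moreover have "finv ?r (x # w) = x # g w"
  proof (rule inv_f_eq)
    show "inj ?r"
      using inj_at_vertex bij_is_inj[OF bij_imp_bij_inv[OF g]] by blast
    show "?r (x # g w) = x # w"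
      using g by (simp add: at_vertex_def bij_is_inj)
  qed
  ultimately have "commutator t ?r (x # w) = x # g w"
    using \<open>t (x # w) = (\<not> x) # ?y\<close> by (simp add: commutator_def)
  then show "state (commutator t ?r) [x] w = g w"
    by (simp add: state_def)
qed

lemma level_transitiveD: "level_transitive G \<Longrightarrow> length u = length w \<Longrightarrow> \<exists>g\<in>G. g u = w"
  unfolding level_transitive_def by blast

lemma states_of_derived_series:
  assumes G: "subgroup G W_grp" and L: "layered G" and "g \<in> G" "length v = n"
  shows "\<exists>h \<in> (derived (grp_of G) ^^ n) G. state h v = g"
  using assms(3,4)
proof (induction n arbitrary: v g)
  case 0
  then show ?case
    by (simp add: state_def)
next
  case (Suc n)
  interpret K: group "grp_of G"
    using group_grp_of[OF G] .
  let ?D = "(derived (grp_of G) ^^ n) G"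
  obtain u x where v: "v = u @ [x]" and u: "length u = n"
    using Suc.prems(2) by (cases v rule: rev_cases) auto
  obtain t where t: "t \<in> G" "t [x] = [\<not> x]"
    using L level_transitiveD[of G "[x]" "[\<not> x]"] by (auto simp: layered_def)
  let ?r = "at_vertex [x] (finv g)"
  have "finv g \<in> G"
    using K.inv_closed[of g] Suc.prems(1) m_inv_grp_of[OF G] by simp
  then have r: "?r \<in> G"
    using L unfolding layered_def by blast
  obtain a b where a: "a \<in> ?D" "state a u = t" and b: "b \<in> ?D" "state b u = ?r"
    using Suc.IH[OF t(1) u] Suc.IH[OF r u] by blast
  then have "a \<in> G" "b \<in> G" "a u = u" "b u = u"
    using derived_series_fixes_level[OF G, of n] u by (auto simp: level_stabilizer_def)
  have "commutator a b \<in> derived_set (grp_of G) ?D"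
    using a(1) b(1) grp_of_commutator[OF G \<open>a \<in> G\<close> \<open>b \<in> G\<close>]
    by (intro UN_I[of a] UN_I[of b]) (simp_all del: mult_grp_of)
  then have "commutator a b \<in> (derived (grp_of G) ^^ Suc n) G"
    by (simp add: derived_def generate.incl)
  have "a \<in> W" "b \<in> W" "t \<in> W" "g \<in> W"
    using \<open>a \<in> G\<close> \<open>b \<in> G\<close> t(1) Suc.prems(1) subgroup_W_grp_subset[OF G] by auto
  have "state (commutator a b) v = state (commutator t ?r) [x]"
    using state_commutator[OF \<open>a \<in> W\<close> \<open>a u = u\<close> \<open>b \<in> W\<close> \<open>b u = u\<close>] a(2) b(2)
    by (simp add: v state_append)
  also have "\<dots> = g"
    using state_commutator_at_vertex[OF \<open>t \<in> W\<close> t(2) W_bij[OF \<open>g \<in> W\<close>]] .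
  finally show ?case
    using \<open>commutator a b \<in> (derived (grp_of G) ^^ Suc n) G\<close> by blast
qed

lemma (in group) characteristic_derived_series:
  "characteristic ((derived G ^^ n) (carrier G)) G"
  unfolding characteristic_def
proof (intro conjI allI impI)
  show "subgroup ((derived G ^^ n) (carrier G)) G"
    using exp_of_derived_is_subgroup[OF subgroup_self] .
  fix \<phi> assume \<phi>: "\<phi> \<in> iso G G"
  then interpret \<phi>: group_hom G G \<phi>
    by (simp add: group_hom_axioms_def group_hom_def iso_iff is_group)
  have "\<phi> ` carrier G = carrier G"
    using \<phi> by (simp add: iso_def bij_betw_def)
  then show "\<phi> ` (derived G ^^ n) (carrier G) = (derived G ^^ n) (carrier G)"
    using \<phi>.exp_of_derived_img[of "carrier G" n] by simp
qed

lemma level_transitive_mono: "level_transitive G \<Longrightarrow> G \<subseteq> H \<Longrightarrow> level_transitive H"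
  unfolding level_transitive_def by blast

theorem lemma3p8:
  assumes "subgroup G W_grp"
    and "layered G"
  shows "saturated G"
  unfolding saturated_def
proof
  fix n
  let ?H = "(derived (grp_of G) ^^ n) G"
  have "characteristic ?H (grp_of G)"
    using group.characteristic_derived_series[OF group_grp_of[OF assms(1)], of n] by simp
  moreover have "\<forall>h\<in>?H. \<forall>v. length v = n \<longrightarrow> h v = v"
    using derived_series_fixes_level[OF assms(1), of n] by (auto simp: level_stabilizer_def)
  moreover have "level_transitive {state h v | h. h \<in> ?H}" if "length v = n" for v
  proof (rule level_transitive_mono)
    show "level_transitive G"
      using assms(2) by (simp add: layered_def)
    show "G \<subseteq> {state h v | h. h \<in> ?H}"
      using states_of_derived_series[OF assms _ that] by force
  qed
  ultimately show "\<exists>H. characteristic H (grp_of G) \<and> (\<forall>h\<in>H. \<forall>v. length v = n \<longrightarrow> h v = v)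
      \<and> (\<forall>v. length v = n \<longrightarrow> level_transitive {state h v | h. h \<in> H})"
    by blast
qed

end
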